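(* Let $\Gamma\subseteq\mathit{Aff}(2,\mathbb{H})$ be an abelian subgroup acting freely on $\mathbb{H}^2$. Then $\Gamma$ is conjugate in $\mathit{Aff}(2,\mathbb{H})$ either to a subgroup of the group of all matrices $\begin{pmatrix} 1&0&r\\ 0&d&0\\ 0&0&1\end{pmatrix}$ with $r,d\in\mathbb{H}$, $d\neq0$, or to a subgroup of the group of all matrices $\begin{pmatrix} 1&b&r\\ 0&1&s\\ 0&0&1\end{pmatrix}$ with $b,r,s\in\mathbb{H}$.
   Context: $\mathit{Aff}(2,\mathbb{H})$ is identified with invertible $3\times3$ quaternionic matrices $\begin{pmatrix} a&b&r\\ c&d&s\\ 0&0&1\end{pmatrix}$ acting on $(x,y)\in\mathbb{H}^2$ by $(x,y)\mapsto(ax+by+r,cx+dy+s)$. *)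

theory Defs
  imports "HOL-Analysis.Analysis"
begin

datatype quat = Quat (Re: real) (Im1: real) (Im2: real) (Im3: real)

lemma quat_eqI [intro?]:
  "Re x = Re y \<Longrightarrow> Im1 x = Im1 y \<Longrightarrow> Im2 x = Im2 y \<Longrightarrow> Im3 x = Im3 y \<Longrightarrow> x = y"
  by (cases x, cases y) simp

instantiation quat :: ring_1
begin
definition "0 = Quat 0 0 0 0"
definition "1 = Quat 1 0 0 0"
definition "x + y = Quat (Re x + Re y) (Im1 x + Im1 y) (Im2 x + Im2 y) (Im3 x + Im3 y)"
definition "x - y = Quat (Re x - Re y) (Im1 x - Im1 y) (Im2 x - Im2 y) (Im3 x - Im3 y)"
definition "- x = Quat (- Re x) (- Im1 x) (- Im2 x) (- Im3 x)"
definition "x * y = Quat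
   (Re x * Re y - Im1 x * Im1 y - Im2 x * Im2 y - Im3 x * Im3 y)
   (Re x * Im1 y + Im1 x * Re y + Im2 x * Im3 y - Im3 x * Im2 y)
   (Re x * Im2 y - Im1 x * Im3 y + Im2 x * Re y + Im3 x * Im1 y)
   (Re x * Im3 y + Im1 x * Im2 y - Im2 x * Im1 y + Im3 x * Re y)"
instance
  by standard (auto intro!: quat_eqI simp: zero_quat_def one_quat_def plus_quat_def
      minus_quat_def uminus_quat_def times_quat_def algebra_simps)
end

text \<open>An element of Aff(2,H) is the matrix ((a,b,r),(c,d,s),(0,0,1)) with quaternion
  entries, invertible as a 3x3 quaternionic matrix. We record the six entries.\<close>

record aff =
  ma :: quat  mb :: quat  mr :: quat
  mc :: quat  md :: quat  ms :: quat

text \<open>Matrix product of the 3x3 matrices ((a,b,r),(c,d,s),(0,0,1)).\<close>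
definition aff_mul :: "aff \<Rightarrow> aff \<Rightarrow> aff" where
  "aff_mul g h =
    \<lparr> ma = ma g * ma h + mb g * mc h, mb = ma g * mb h + mb g * md h,
      mr = ma g * mr h + mb g * ms h + mr g,
      mc = mc g * ma h + md g * mc h, md = mc g * mb h + md g * md h,
      ms = mc g * mr h + md g * ms h + ms g \<rparr>"

definition aff_id :: aff where
  "aff_id = \<lparr> ma = 1, mb = 0, mr = 0, mc = 0, md = 1, ms = 0 \<rparr>"

definition Aff2H :: "aff set" where
  "Aff2H = {g. \<exists>h. aff_mul g h = aff_id \<and> aff_mul h g = aff_id}"

definition aff_apply :: "aff \<Rightarrow> quat \<times> quat \<Rightarrow> quat \<times> quat" where
  "aff_apply g p = (ma g * fst p + mb g * snd p + mr g, mc g * fst p + md g * snd p + ms g)"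

definition is_subgroup_Aff :: "aff set \<Rightarrow> bool" where
  "is_subgroup_Aff G \<longleftrightarrow> G \<subseteq> Aff2H \<and> aff_id \<in> G \<and>
     (\<forall>g\<in>G. \<forall>h\<in>G. aff_mul g h \<in> G) \<and>
     (\<forall>g\<in>G. \<exists>h\<in>G. aff_mul g h = aff_id \<and> aff_mul h g = aff_id)"

definition is_abelian :: "aff set \<Rightarrow> bool" where
  "is_abelian G \<longleftrightarrow> (\<forall>g\<in>G. \<forall>h\<in>G. aff_mul g h = aff_mul h g)"

definition acts_freely :: "aff set \<Rightarrow> bool" where
  "acts_freely G \<longleftrightarrow> (\<forall>g\<in>G. \<forall>p. aff_apply g p = p \<longrightarrow> g = aff_id)"

text \<open>Conjugation: C g C^{-1}, with Ci the inverse of C.\<close>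
definition conj_set :: "aff \<Rightarrow> aff \<Rightarrow> aff set \<Rightarrow> aff set" where
  "conj_set C Ci G = (\<lambda>g. aff_mul (aff_mul C g) Ci) ` G"

definition TypeI :: "aff set" where
  "TypeI = {\<lparr> ma = 1, mb = 0, mr = r, mc = 0, md = d, ms = 0 \<rparr> | r d. d \<noteq> 0}"

definition TypeII :: "aff set" where
  "TypeII = {\<lparr> ma = 1, mb = b, mr = r, mc = 0, md = 1, ms = s \<rparr> | b r s. True}"

end

(*
  Pick g in the group that is not a translation (if there is none, the group is of Type II
  already). Since g is fixed-point free, 1 is an eigenvalue of its linear part A: otherwise A - I
  would be invertible (Gaussian elimination works over the division ring H) and g would have a
  fixed point. Moving such an eigenvector to the first basis vector makes A upper triangular with
  top-left entry 1. If the other diagonal entry d is not 1, a further conjugation turns g into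
  (x, y) |-> (x + r, d y) with r nonzero, and everything commuting with it is of Type I. If d = 1,
  g is a shear (x, y) |-> (x + b y + r, y + s) with b nonzero; an element h commuting with it is
  upper triangular with b d_h = a_h b, so if a_h were not 1, neither diagonal entry of A_h - I
  would vanish and h would have a fixed point. Hence every element of the group is of Type II.
*)

theory Submission
  imports Defs
begin

section \<open>Quaternions form a division ring\<close>

instantiation quat :: division_ring
begin

definition inverse_quat :: "quat \<Rightarrow> quat" where
  "inverse q = (let n = (Re q)\<^sup>2 + (Im1 q)\<^sup>2 + (Im2 q)\<^sup>2 + (Im3 q)\<^sup>2
     in Quat (Re q / n) (- Im1 q / n) (- Im2 q / n) (- Im3 q / n))"

definition divide_quat :: "quat \<Rightarrow> quat \<Rightarrow> quat" where
  "divide_quat x y = x * inverse y"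

lemma quat_norm_sq_nonzero:
  "q \<noteq> 0 \<Longrightarrow> (Re q)\<^sup>2 + (Im1 q)\<^sup>2 + (Im2 q)\<^sup>2 + (Im3 q)\<^sup>2 \<noteq> 0"
  by (cases q) (auto simp: zero_quat_def add_nonneg_eq_0_iff)

instance
proof
  fix q :: quat
  assume "q \<noteq> 0"
  obtain a b c d where q: "q = Quat a b c d" by (cases q)
  define n where "n = a * a + b * b + c * c + d * d"
  have "n \<noteq> 0" using quat_norm_sq_nonzero[OF \<open>q \<noteq> 0\<close>] by (simp add: q n_def power2_eq_square)
  have inv: "inverse q = Quat (a * inverse n) (- b * inverse n) (- c * inverse n) (- d * inverse n)"
    by (simp add: q inverse_quat_def n_def power2_eq_square divide_inverse Let_def)
  have "inverse q * q = Quat (inverse n * n) 0 0 0" "q * inverse q = Quat (inverse n * n) 0 0 0"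
    unfolding inv by (simp_all add: q times_quat_def n_def algebra_simps)
  then show "inverse q * q = 1" and "q * inverse q = 1"
    using \<open>n \<noteq> 0\<close> by (simp_all add: one_quat_def)
qed (simp_all add: divide_quat_def inverse_quat_def zero_quat_def)

end

section \<open>Linear systems of size two over a division ring\<close>

lemma solvable_2x2_of_trivial_kernel_pivot:
  fixes p q r s t1 t2 :: "'a::division_ring"
  assumes "p \<noteq> 0"
    and kernel: "\<And>x y. p * x + q * y = 0 \<Longrightarrow> r * x + s * y = 0 \<Longrightarrow> x = 0 \<and> y = 0"
  shows "\<exists>x y. p * x + q * y = t1 \<and> r * x + s * y = t2"
proof -
  define \<delta> where "\<delta> = s - r * inverse p * q"
  have "\<delta> \<noteq> 0"
  proof
    assume "\<delta> = 0"
    have "p * (- (inverse p * q)) + q * 1 = 0" using \<open>p \<noteq> 0\<close> by (simp add: mult.assoc[symmetric])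
    moreover have "r * (- (inverse p * q)) + s * 1 = 0"
      using \<open>\<delta> = 0\<close> by (simp add: \<delta>_def mult.assoc)
    ultimately show False using kernel by fastforce
  qed
  define y where "y = inverse \<delta> * (t2 - r * inverse p * t1)"
  define x where "x = inverse p * (t1 - q * y)"
  have "p * x + q * y = t1" using \<open>p \<noteq> 0\<close> by (simp add: x_def mult.assoc[symmetric])
  moreover have "r * x + s * y = r * inverse p * t1 + \<delta> * y"
    by (simp add: x_def \<delta>_def algebra_simps mult.assoc)
  then have "r * x + s * y = t2" using \<open>\<delta> \<noteq> 0\<close> by (simp add: y_def mult.assoc[symmetric])
  ultimately show ?thesis by blast
qed

lemma solvable_2x2_of_trivial_kernel:
  fixes p q r s t1 t2 :: "'a::division_ring"
  assumes kernel: "\<And>x y. p * x + q * y = 0 \<Longrightarrow> r * x + s * y = 0 \<Longrightarrow> x = 0 \<and> y = 0"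
  shows "\<exists>x y. p * x + q * y = t1 \<and> r * x + s * y = t2"
proof -
  have "p \<noteq> 0 \<or> r \<noteq> 0" using kernel[of 1 0] by auto
  then show ?thesis
  proof
    assume "p \<noteq> 0"
    then show ?thesis using solvable_2x2_of_trivial_kernel_pivot kernel by blast
  next
    assume "r \<noteq> 0"
    then show ?thesis using solvable_2x2_of_trivial_kernel_pivot[of r s p q t2 t1] kernel by blast
  qed
qed

lemma sub_one_mult_add_eq_iff:
  fixes a x z w :: "'a::ring_1"
  shows "(a - 1) * x + z = w \<longleftrightarrow> a * x + z = x + w"
    and "z + (a - 1) * x = w \<longleftrightarrow> z + a * x = x + w"
  by (auto simp: algebra_simps)

lemma aff_mul_assoc: "aff_mul (aff_mul f g) h = aff_mul f (aff_mul g h)"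
  by (simp add: aff_mul_def algebra_simps)

lemma aff_mul_id [simp]: "aff_mul aff_id g = g" "aff_mul g aff_id = g"
  by (simp_all add: aff_mul_def aff_id_def)

lemma aff_apply_mul: "aff_apply (aff_mul g h) p = aff_apply g (aff_apply h p)"
  by (simp add: aff_mul_def aff_apply_def algebra_simps)

lemma aff_apply_id [simp]: "aff_apply aff_id p = p"
  by (simp add: aff_apply_def aff_id_def)

definition aff_inverses :: "aff \<Rightarrow> aff \<Rightarrow> bool" where
  "aff_inverses C Ci \<longleftrightarrow> aff_mul C Ci = aff_id \<and> aff_mul Ci C = aff_id"

lemma Aff2H_iff: "g \<in> Aff2H \<longleftrightarrow> (\<exists>h. aff_inverses g h)"
  by (simp add: Aff2H_def aff_inverses_def)

lemma aff_inverses_in_Aff2H: "aff_inverses C Ci \<Longrightarrow> C \<in> Aff2H"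
  by (auto simp: Aff2H_iff)

lemma aff_inverses_id: "aff_inverses aff_id aff_id"
  by (simp add: aff_inverses_def)

lemma aff_inverses_sym: "aff_inverses C Ci \<Longrightarrow> aff_inverses Ci C"
  by (simp add: aff_inverses_def)

lemma aff_inverses_mul:
  "aff_inverses C Ci \<Longrightarrow> aff_inverses D Di \<Longrightarrow> aff_inverses (aff_mul D C) (aff_mul Ci Di)"
  unfolding aff_inverses_def by (metis aff_mul_assoc aff_mul_id)

definition aff_conj :: "aff \<Rightarrow> aff \<Rightarrow> aff \<Rightarrow> aff" where
  "aff_conj C Ci g = aff_mul (aff_mul C g) Ci"

lemma conj_set_eq_image: "conj_set C Ci G = aff_conj C Ci ` G"
  by (simp add: conj_set_def aff_conj_def)

lemma aff_conj_conj: "aff_conj D Di (aff_conj C Ci g) = aff_conj (aff_mul D C) (aff_mul Ci Di) g"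
  by (simp add: aff_conj_def aff_mul_assoc)

lemma aff_conj_cancel: "aff_inverses C Ci \<Longrightarrow> aff_conj Ci C (aff_conj C Ci g) = g"
  by (simp add: aff_conj_conj aff_inverses_def) (simp add: aff_conj_def)

lemma aff_conj_mul:
  "aff_inverses C Ci \<Longrightarrow> aff_conj C Ci (aff_mul g h) = aff_mul (aff_conj C Ci g) (aff_conj C Ci h)"
  unfolding aff_conj_def aff_inverses_def by (metis aff_mul_assoc aff_mul_id(2))

lemma aff_conj_id: "aff_inverses C Ci \<Longrightarrow> aff_conj C Ci aff_id = aff_id"
  by (simp add: aff_conj_def aff_inverses_def)

lemma aff_conj_in_Aff2H: "aff_inverses C Ci \<Longrightarrow> g \<in> Aff2H \<Longrightarrow> aff_conj C Ci g \<in> Aff2H"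
  unfolding Aff2H_iff aff_inverses_def by (metis aff_conj_mul aff_conj_id aff_inverses_def)

lemma aff_apply_conj:
  "aff_inverses C Ci \<Longrightarrow> aff_apply (aff_conj C Ci g) (aff_apply C p) = aff_apply C (aff_apply g p)"
  by (simp add: aff_conj_def aff_apply_mul[symmetric] aff_mul_assoc aff_inverses_def)

lemma aff_apply_inverses:
  "aff_inverses C Ci \<Longrightarrow> aff_apply C (aff_apply Ci p) = p"
  "aff_inverses C Ci \<Longrightarrow> aff_apply Ci (aff_apply C p) = p"
  by (simp_all add: aff_inverses_def flip: aff_apply_mul)

definition aff_free :: "aff \<Rightarrow> bool" where
  "aff_free g \<longleftrightarrow> (\<forall>p. aff_apply g p = p \<longrightarrow> g = aff_id)"

lemma acts_freely_iff: "acts_freely G \<longleftrightarrow> (\<forall>g\<in>G. aff_free g)"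
  by (simp add: acts_freely_def aff_free_def)

lemma aff_free_conj:
  assumes "aff_inverses C Ci" and "aff_free g"
  shows "aff_free (aff_conj C Ci g)"
  unfolding aff_free_def
proof (intro allI impI)
  fix p
  assume fixed: "aff_apply (aff_conj C Ci g) p = p"
  define q where "q = aff_apply Ci p"
  have p: "p = aff_apply C q"
    using assms(1) by (simp add: q_def aff_apply_inverses)
  have "q = aff_apply Ci (aff_apply (aff_conj C Ci g) p)" by (simp add: fixed q_def)
  also have "\<dots> = aff_apply Ci (aff_apply C (aff_apply g q))"
    using assms(1) by (simp add: p aff_apply_conj)
  also have "\<dots> = aff_apply g q"
    using assms(1) by (simp add: aff_apply_inverses)
  finally have "aff_apply g q = q" ..
  then have "g = aff_id" using assms(2) by (simp only: aff_free_def)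
  then show "aff_conj C Ci g = aff_id" using assms(1) by (simp add: aff_conj_id)
qed

definition is_translation :: "aff \<Rightarrow> bool" where
  "is_translation g \<longleftrightarrow> ma g = 1 \<and> mb g = 0 \<and> mc g = 0 \<and> md g = 1"

lemma is_translation_conj:
  "aff_inverses C Ci \<Longrightarrow> is_translation g \<Longrightarrow> is_translation (aff_conj C Ci g)"
  unfolding aff_inverses_def is_translation_def aff_conj_def
  by (simp add: aff_mul_def aff_id_def algebra_simps)

lemma is_translation_conj_iff:
  "aff_inverses C Ci \<Longrightarrow> is_translation (aff_conj C Ci g) \<longleftrightarrow> is_translation g"
  by (metis is_translation_conj aff_conj_cancel aff_inverses_sym)

lemma conj_set_subset_Aff2H:
  "aff_inverses C Ci \<Longrightarrow> G \<subseteq> Aff2H \<Longrightarrow> conj_set C Ci G \<subseteq> Aff2H"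
  by (auto simp: conj_set_eq_image aff_conj_in_Aff2H)

lemma is_abelian_conj_set: "aff_inverses C Ci \<Longrightarrow> is_abelian G \<Longrightarrow> is_abelian (conj_set C Ci G)"
  by (auto simp: is_abelian_def conj_set_eq_image simp flip: aff_conj_mul)

lemma acts_freely_conj_set: "aff_inverses C Ci \<Longrightarrow> acts_freely G \<Longrightarrow> acts_freely (conj_set C Ci G)"
  by (auto simp: acts_freely_iff conj_set_eq_image aff_free_conj)

lemma TypeI_iff: "g \<in> TypeI \<longleftrightarrow> ma g = 1 \<and> mb g = 0 \<and> mc g = 0 \<and> ms g = 0 \<and> md g \<noteq> 0"
  by (cases g) (auto simp: TypeI_def)

lemma TypeII_iff: "g \<in> TypeII \<longleftrightarrow> ma g = 1 \<and> mc g = 0 \<and> md g = 1"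
  by (cases g) (auto simp: TypeII_def)

section \<open>Normal form of a free element\<close>

lemma fixed_point_free_eigenvector:
  assumes "\<And>p. aff_apply g p \<noteq> p"
  shows "\<exists>v1 v2. (v1 \<noteq> 0 \<or> v2 \<noteq> 0) \<and> ma g * v1 + mb g * v2 = v1 \<and> mc g * v1 + md g * v2 = v2"
proof (rule ccontr)
  assume no_eigenvector: "\<not> ?thesis"
  have "x = 0 \<and> y = 0"
    if "(ma g - 1) * x + mb g * y = 0" "mc g * x + (md g - 1) * y = 0" for x y
  proof -
    have "ma g * x + mb g * y = x" "mc g * x + md g * y = y"
      using that by (simp_all add: sub_one_mult_add_eq_iff)
    then show ?thesis using no_eigenvector by blast
  qed
  then have "\<exists>x y. (ma g - 1) * x + mb g * y = - mr g \<and> mc g * x + (md g - 1) * y = - ms g"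
    by (rule solvable_2x2_of_trivial_kernel)
  then obtain x y where
    "(ma g - 1) * x + mb g * y = - mr g" "mc g * x + (md g - 1) * y = - ms g"
    by blast
  then have "ma g * x + mb g * y = x - mr g" "mc g * x + md g * y = y - ms g"
    by (simp_all add: sub_one_mult_add_eq_iff)
  then have "aff_apply g (x, y) = (x, y)" by (simp add: aff_apply_def)
  then show False using assms by blast
qed

lemma exists_aff_inverses_first_column:
  assumes "v1 \<noteq> 0 \<or> v2 \<noteq> 0"
  shows "\<exists>C Ci. aff_inverses C Ci \<and> ma Ci = v1 \<and> mc Ci = v2"
proof (cases "v1 = 0")
  case False
  let ?Ci = "\<lparr>ma = v1, mb = 0, mr = 0, mc = v2, md = 1, ms = 0\<rparr>"
  let ?C = "\<lparr>ma = inverse v1, mb = 0, mr = 0, mc = - (v2 * inverse v1), md = 1, ms = 0\<rparr>"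
  have "aff_inverses ?C ?Ci"
    using False by (simp add: aff_inverses_def aff_mul_def aff_id_def mult.assoc)
  then show ?thesis by force
next
  case True
  with assms have "v2 \<noteq> 0" by simp
  let ?Ci = "\<lparr>ma = 0, mb = 1, mr = 0, mc = v2, md = 0, ms = 0\<rparr>"
  let ?C = "\<lparr>ma = 0, mb = inverse v2, mr = 0, mc = 1, md = 0, ms = 0\<rparr>"
  have "aff_inverses ?C ?Ci"
    using \<open>v2 \<noteq> 0\<close> by (simp add: aff_inverses_def aff_mul_def aff_id_def)
  then show ?thesis using True by force
qed

lemma aff_conj_first_column:
  assumes "aff_inverses C Ci"
    and "ma g * ma Ci + mb g * mc Ci = ma Ci" "mc g * ma Ci + md g * mc Ci = mc Ci"
  shows "ma (aff_conj C Ci g) = 1" "mc (aff_conj C Ci g) = 0"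
proof -
  have "ma (aff_conj C Ci g)
      = ma C * (ma g * ma Ci + mb g * mc Ci) + mb C * (mc g * ma Ci + md g * mc Ci)"
    "mc (aff_conj C Ci g)
      = mc C * (ma g * ma Ci + mb g * mc Ci) + md C * (mc g * ma Ci + md g * mc Ci)"
    by (simp_all add: aff_conj_def aff_mul_def algebra_simps)
  then have "ma (aff_conj C Ci g) = ma (aff_mul C Ci)" "mc (aff_conj C Ci g) = mc (aff_mul C Ci)"
    using assms(2,3) by (simp_all add: aff_mul_def)
  then show "ma (aff_conj C Ci g) = 1" "mc (aff_conj C Ci g) = 0"
    using assms(1) by (simp_all add: aff_inverses_def aff_id_def)
qed

lemma fixed_point_free_conj_upper_triangular:
  assumes "\<And>p. aff_apply g p \<noteq> p"
  shows "\<exists>C Ci. aff_inverses C Ci \<and> ma (aff_conj C Ci g) = 1 \<and> mc (aff_conj C Ci g) = 0"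
proof -
  obtain v1 v2 where v: "v1 \<noteq> 0 \<or> v2 \<noteq> 0"
    "ma g * v1 + mb g * v2 = v1" "mc g * v1 + md g * v2 = v2"
    using fixed_point_free_eigenvector[OF assms] by blast
  obtain C Ci where "aff_inverses C Ci" "ma Ci = v1" "mc Ci = v2"
    using exists_aff_inverses_first_column[OF v(1)] by blast
  then show ?thesis using aff_conj_first_column v by metis
qed

definition typeI_normal_form :: "aff \<Rightarrow> bool" where
  "typeI_normal_form g \<longleftrightarrow> ma g = 1 \<and> mb g = 0 \<and> mc g = 0 \<and> ms g = 0 \<and> md g \<noteq> 1"

definition typeII_normal_form :: "aff \<Rightarrow> bool" where
  "typeII_normal_form g \<longleftrightarrow> ma g = 1 \<and> mc g = 0 \<and> md g = 1 \<and> mb g \<noteq> 0"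

lemma upper_triangular_conj_typeI_normal_form:
  assumes "ma g = 1" "mc g = 0" "md g \<noteq> 1"
  shows "\<exists>C Ci. aff_inverses C Ci \<and> typeI_normal_form (aff_conj C Ci g)"
proof -
  have "md g - 1 \<noteq> 0" "1 - md g \<noteq> 0" using assms(3) by simp_all
  define c where "c = mb g * inverse (1 - md g)"
  define k where "k = - (inverse (1 - md g) * ms g)"
  have c: "c * (1 - md g) = mb g"
    using \<open>1 - md g \<noteq> 0\<close> by (simp add: c_def mult.assoc)
  have k: "(1 - md g) * k = - ms g"
    using \<open>1 - md g \<noteq> 0\<close> by (simp add: k_def flip: mult.assoc)
  let ?C = "\<lparr>ma = 1, mb = c, mr = 0, mc = 0, md = 1, ms = k\<rparr>"
  let ?Ci = "\<lparr>ma = 1, mb = - c, mr = c * k, mc = 0, md = 1, ms = - k\<rparr>"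
  have "aff_inverses ?C ?Ci"
    by (simp add: aff_inverses_def aff_mul_def aff_id_def)
  moreover have "typeI_normal_form (aff_conj ?C ?Ci g)"
    using assms c k by (simp add: typeI_normal_form_def aff_conj_def aff_mul_def algebra_simps)
  ultimately show ?thesis by blast
qed

lemma aff_free_conj_normal_form:
  assumes "aff_free g" and "\<not> is_translation g"
  shows "\<exists>C Ci. aff_inverses C Ci \<and>
    (typeI_normal_form (aff_conj C Ci g) \<or> typeII_normal_form (aff_conj C Ci g))"
proof -
  have "g \<noteq> aff_id" using assms(2) by (auto simp: is_translation_def aff_id_def)
  then have "aff_apply g p \<noteq> p" for p using assms(1) unfolding aff_free_def by blast
  then obtain C Ci where C: "aff_inverses C Ci"
    and upper: "ma (aff_conj C Ci g) = 1" "mc (aff_conj C Ci g) = 0"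
    using fixed_point_free_conj_upper_triangular by blast
  show ?thesis
  proof (cases "md (aff_conj C Ci g) = 1")
    case True
    have "\<not> is_translation (aff_conj C Ci g)"
      using assms(2) C by (simp add: is_translation_conj_iff)
    then have "typeII_normal_form (aff_conj C Ci g)"
      using True upper by (simp add: is_translation_def typeII_normal_form_def)
    then show ?thesis using C by blast
  next
    case False
    then obtain D Di
      where D: "aff_inverses D Di" "typeI_normal_form (aff_conj D Di (aff_conj C Ci g))"
      using upper_triangular_conj_typeI_normal_form upper by blast
    have "aff_inverses (aff_mul D C) (aff_mul Ci Di)" using C D(1) by (rule aff_inverses_mul)
    moreover have "typeI_normal_form (aff_conj (aff_mul D C) (aff_mul Ci Di) g)"
      using D(2) by (simp add: aff_conj_conj)
    ultimately show ?thesis by blast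
  qed
qed

section \<open>Centralizers of the normal forms\<close>

lemma typeI_normal_form_centralizer:
  assumes g: "typeI_normal_form g" "aff_free g"
    and comm: "aff_mul g h = aff_mul h g" and "h \<in> Aff2H"
  shows "h \<in> TypeI"
proof -
  have "mr g \<noteq> 0"
  proof
    assume "mr g = 0"
    then have "aff_apply g (0, 0) = (0, 0)"
      using g(1) by (simp add: typeI_normal_form_def aff_apply_def)
    then have "g = aff_id" using g(2) unfolding aff_free_def by blast
    then show False using g(1) by (simp add: typeI_normal_form_def aff_id_def)
  qed
  have "md g - 1 \<noteq> 0" using g(1) by (simp add: typeI_normal_form_def)
  have "mb h = mb h * md g" "md g * mc h = mc h" "mr h + mr g = ma h * mr g + mr h"
    "md g * ms h = mc h * mr g + ms h"
    using comm g(1) by (simp_all add: aff_mul_def typeI_normal_form_def)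
  then have "mb h * (md g - 1) = 0" "(md g - 1) * mc h = 0" "(ma h - 1) * mr g = 0"
    "(md g - 1) * ms h = mc h * mr g"
    by (simp_all add: algebra_simps)
  then have lin: "mb h = 0" "mc h = 0" "ma h = 1" "ms h = 0"
    using \<open>md g - 1 \<noteq> 0\<close> \<open>mr g \<noteq> 0\<close> by simp_all
  obtain k where "aff_mul h k = aff_id" using \<open>h \<in> Aff2H\<close> by (auto simp: Aff2H_def)
  then have "md (aff_mul h k) = 1" by (simp add: aff_id_def)
  then have "md h * md k = 1" using lin by (simp add: aff_mul_def)
  then have "md h \<noteq> 0" by auto
  then show ?thesis using lin by (simp add: TypeI_iff)
qed

lemma typeII_normal_form_centralizer:
  assumes g: "typeII_normal_form g"
    and comm: "aff_mul g h = aff_mul h g" and h: "aff_free h"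
  shows "h \<in> TypeII"
proof -
  have "mb g * mc h = 0" "mb g * md h = ma h * mb g"
    using comm g by (simp_all add: aff_mul_def typeII_normal_form_def)
  then have c: "mc h = 0" and conj: "mb g * md h = ma h * mb g"
    using g by (simp_all add: typeII_normal_form_def)
  have a: "ma h = 1"
  proof (rule ccontr)
    assume "ma h \<noteq> 1"
    have "md h \<noteq> 1"
    proof
      assume "md h = 1"
      then have "(ma h - 1) * mb g = 0" using conj by (simp add: algebra_simps)
      then show False using \<open>ma h \<noteq> 1\<close> g by (simp add: typeII_normal_form_def)
    qed
    have "h \<noteq> aff_id" using \<open>ma h \<noteq> 1\<close> by (auto simp: aff_id_def)
    then have "aff_apply h p \<noteq> p" for p using h unfolding aff_free_def by blast
    then have "\<exists>v1 v2. (v1 \<noteq> 0 \<or> v2 \<noteq> 0) \<and> ma h * v1 + mb h * v2 = v1 \<and> mc h * v1 + md h * v2 = v2"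
      by (rule fixed_point_free_eigenvector)
    then obtain v1 v2 where v: "v1 \<noteq> 0 \<or> v2 \<noteq> 0"
      "ma h * v1 + mb h * v2 = v1" "mc h * v1 + md h * v2 = v2"
      by blast
    have "(md h - 1) * v2 = 0" using v(3) c by (simp add: algebra_simps)
    then have "v2 = 0" using \<open>md h \<noteq> 1\<close> by simp
    then have "(ma h - 1) * v1 = 0" using v(2) by (simp add: algebra_simps)
    then show False using \<open>ma h \<noteq> 1\<close> \<open>v2 = 0\<close> v(1) by simp
  qed
  have "mb g * (md h - 1) = 0" using conj a by (simp add: algebra_simps)
  then have "md h = 1" using g by (simp add: typeII_normal_form_def)
  then show ?thesis using a c by (simp add: TypeII_iff)
qed

lemma free_abelian_subset_TypeI_or_TypeII:
  assumes "G \<subseteq> Aff2H" "is_abelian G" "acts_freely G" "g \<in> G"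
    and "typeI_normal_form g \<or> typeII_normal_form g"
  shows "G \<subseteq> TypeI \<or> G \<subseteq> TypeII"
  using assms(5)
proof
  assume "typeI_normal_form g"
  then have "h \<in> TypeI" if "h \<in> G" for h
    using typeI_normal_form_centralizer assms(1-4) that
    unfolding is_abelian_def acts_freely_iff by blast
  then show ?thesis by blast
next
  assume "typeII_normal_form g"
  then have "h \<in> TypeII" if "h \<in> G" for h
    using typeII_normal_form_centralizer assms(2-4) that
    unfolding is_abelian_def acts_freely_iff by blast
  then show ?thesis by blast
qed

theorem mainTheorem11:
  fixes \<Gamma> :: "aff set"
  assumes "is_subgroup_Aff \<Gamma>" and "is_abelian \<Gamma>" and "acts_freely \<Gamma>"
  shows "\<exists>C\<in>Aff2H. \<exists>Ci. aff_mul C Ci = aff_id \<and> aff_mul Ci C = aff_id \<and>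
           (conj_set C Ci \<Gamma> \<subseteq> TypeI \<or> conj_set C Ci \<Gamma> \<subseteq> TypeII)"
proof (cases "\<forall>g\<in>\<Gamma>. is_translation g")
  case True
  then have "conj_set aff_id aff_id \<Gamma> \<subseteq> TypeII"
    by (auto simp: conj_set_def TypeII_iff is_translation_def)
  then show ?thesis
    using aff_inverses_id aff_inverses_in_Aff2H unfolding aff_inverses_def by blast
next
  case False
  then obtain g0 where g0: "g0 \<in> \<Gamma>" "\<not> is_translation g0" by blast
  then have "aff_free g0" using assms(3) by (simp add: acts_freely_iff)
  with g0(2) obtain C Ci where C: "aff_inverses C Ci"
    and nf: "typeI_normal_form (aff_conj C Ci g0) \<or> typeII_normal_form (aff_conj C Ci g0)"
    using aff_free_conj_normal_form by blast
  have "\<Gamma> \<subseteq> Aff2H" using assms(1) by (simp add: is_subgroup_Aff_def)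
  then have "conj_set C Ci \<Gamma> \<subseteq> Aff2H" "is_abelian (conj_set C Ci \<Gamma>)"
    "acts_freely (conj_set C Ci \<Gamma>)"
    using assms(2,3) C
    by (simp_all add: conj_set_subset_Aff2H is_abelian_conj_set acts_freely_conj_set)
  moreover have "aff_conj C Ci g0 \<in> conj_set C Ci \<Gamma>" using g0(1) by (simp add: conj_set_eq_image)
  ultimately have "conj_set C Ci \<Gamma> \<subseteq> TypeI \<or> conj_set C Ci \<Gamma> \<subseteq> TypeII"
    using nf by (rule free_abelian_subset_TypeI_or_TypeII)
  then show ?thesis using C aff_inverses_in_Aff2H[OF C] unfolding aff_inverses_def by blast
qed

end
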